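(* Let $b$ be a positive integer, let $p$ be an odd prime not dividing $b$, and let $T$ be the set of all integers of the form $p^k b'$ with $k\in\mathbb N$ and $b'$ an odd positive divisor of $b^n$ for some $n$. If $f,g\in\mathcal R_b$ satisfy $\mathrm{ev}_\xi(f)=\mathrm{ev}_\xi(g)$ for every root of unity $\xi$ whose order lies in $T$, then $f=g$.
   Context: $(q;q^2)_k=(1-q)(1-q^3)\cdots(1-q^{2k-1})$ and $\mathcal R_b=\varprojlim_k \mathbb Z[1/b][q]/((q;q^2)_k)$. For $f\in\mathcal R_b$ and a root of unity $\xi$ of odd order, $\mathrm{ev}_\xi(f)\in\mathbb Z[1/b][\xi]$ is obtained by substituting $q=\xi$ (well defined since the image of $(q;q^2)_k$ vanishes at $\xi$ for $k$ large). $\mathbb N=\{1,2,3,\dots\}$. *)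

theory Defs
  imports Complex_Main "HOL-Computational_Algebra.Polynomial"
begin

definition Zinv :: "nat \<Rightarrow> rat set" where
  "Zinv b = {x. \<exists>(z::int) (n::nat). x = of_int z / of_nat (b ^ n)}"

definition Zinv_poly :: "nat \<Rightarrow> rat poly \<Rightarrow> bool" where
  "Zinv_poly b P \<longleftrightarrow> (\<forall>i. coeff P i \<in> Zinv b)"

definition Zinv_dvd :: "nat \<Rightarrow> rat poly \<Rightarrow> rat poly \<Rightarrow> bool" where
  "Zinv_dvd b D P \<longleftrightarrow> (\<exists>H. Zinv_poly b H \<and> P = D * H)"

definition qpoch :: "nat \<Rightarrow> rat poly" where
  "qpoch k = (\<Prod>i<k. 1 - monom 1 (2 * i + 1))"

text \<open>Elements of R_b = lim_k Z[1/b][q]/((q;q^2)_k), represented as compatible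
  sequences of representatives: f k represents the image in Z[1/b][q]/((q;q^2)_k).\<close>
definition in_Rb :: "nat \<Rightarrow> (nat \<Rightarrow> rat poly) \<Rightarrow> bool" where
  "in_Rb b f \<longleftrightarrow> (\<forall>k. Zinv_poly b (f k)) \<and>
                  (\<forall>k. Zinv_dvd b (qpoch k) (f (Suc k) - f k))"

definition Rb_eq :: "nat \<Rightarrow> (nat \<Rightarrow> rat poly) \<Rightarrow> (nat \<Rightarrow> rat poly) \<Rightarrow> bool" where
  "Rb_eq b f g \<longleftrightarrow> (\<forall>k. Zinv_dvd b (qpoch k) (f k - g k))"

definition root_of_unity_order :: "complex \<Rightarrow> nat \<Rightarrow> bool" where
  "root_of_unity_order \<xi> m \<longleftrightarrow> m > 0 \<and> \<xi> ^ m = 1 \<and> (\<forall>j. 0 < j \<and> j < m \<longrightarrow> \<xi> ^ j \<noteq> 1)"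

text \<open>ev_xi(f) for xi of odd order m: substitute q = xi into the representative at level m
  (since 2m-1 \<ge> m, (q;q^2)_m vanishes at xi, so this is the stable value).\<close>
definition ev :: "complex \<Rightarrow> nat \<Rightarrow> (nat \<Rightarrow> rat poly) \<Rightarrow> complex" where
  "ev \<xi> m f = poly (map_poly of_rat (f m)) \<xi>"

definition Tset :: "nat \<Rightarrow> nat \<Rightarrow> nat set" where
  "Tset b p = {p ^ k * b' | k b'. k \<ge> 1 \<and> odd b' \<and> b' > 0 \<and> (\<exists>n. b' dvd b ^ n)}"

end

theory Submission
  imports Defs "HOL-Computational_Algebra.Fundamental_Theorem_Algebra"
begin

(* Proof of Proposition 2.  Put h = f - g, a compatible sequence of Z[1/b]-polynomials;
   we must show that (q;q^2)_k divides h k in Z[1/b][q] for every k.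

   Call an odd n "tail divisible" if for every e the polynomial (1 - q^n)^e divides h N
   in Z[1/b][q] for all large N.  Throughout, divisibility by D is detected p-adically:
   if D has leading coefficient +-1 and p does not divide b, then a polynomial lying in
   the ideal (D, p^t) for every t is divisible by D (lemma separation).

   1. Base case: every odd c dividing some b^K is tail divisible.  The polynomial
      W = (1 - q^(c p^j)) / (1 - q^c) is squarefree and its roots are roots of unity
      whose order lies in T, where h vanishes; hence W divides h N.  By the Frobenius
      congruence (1 - x)^p = 1 - x^p (mod p), W lies in ((1 - q^c)^e, p^t) for j = e + t.
   2. Induction step: if n is tail divisible and l is a prime not dividing b, then n l
      is tail divisible, because (1 - q^n)^l = 1 - q^(n l) (mod l).
   3. Hence every odd n is tail divisible; for n = 1 * 3 * ... * (2k-1) the polynomial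
      (q;q^2)_k divides (1 - q^n)^k, so it divides h N for large N and therefore h k. *)

lemma Zinv_of_int [simp]: "of_int z \<in> Zinv b"
  unfolding Zinv_def by (rule CollectI, rule exI[of _ z], rule exI[of _ 0]) simp

lemma Zinv_0 [simp]: "0 \<in> Zinv b" and Zinv_1 [simp]: "1 \<in> Zinv b"
  using Zinv_of_int[of 0 b] Zinv_of_int[of 1 b] by simp_all

lemma Zinv_add:
  assumes "b > 0" "x \<in> Zinv b" "y \<in> Zinv b" shows "x + y \<in> Zinv b"
proof -
  obtain z n where x: "x = of_int z / of_nat (b ^ n)" using assms(2) unfolding Zinv_def by blast
  obtain w m where y: "y = of_int w / of_nat (b ^ m)" using assms(3) unfolding Zinv_def by blast
  have "x + y = of_int (z * int b ^ m + w * int b ^ n) / of_nat (b ^ (n + m))"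
    using assms(1) by (simp add: x y field_simps power_add)
  then show ?thesis unfolding Zinv_def by blast
qed

lemma Zinv_mult:
  assumes "x \<in> Zinv b" "y \<in> Zinv b" shows "x * y \<in> Zinv b"
proof -
  obtain z n where x: "x = of_int z / of_nat (b ^ n)" using assms(1) unfolding Zinv_def by blast
  obtain w m where y: "y = of_int w / of_nat (b ^ m)" using assms(2) unfolding Zinv_def by blast
  have "x * y = of_int (z * w) / of_nat (b ^ (n + m))"
    by (simp add: x y power_add)
  then show ?thesis unfolding Zinv_def by blast
qed

lemma Zinv_uminus: "x \<in> Zinv b \<Longrightarrow> - x \<in> Zinv b"
  using Zinv_mult[OF Zinv_of_int[of "-1"]] by simp

lemma Zinv_diff: "b > 0 \<Longrightarrow> x \<in> Zinv b \<Longrightarrow> y \<in> Zinv b \<Longrightarrow> x - y \<in> Zinv b"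
  using Zinv_add[OF _ _ Zinv_uminus] by simp

lemma Zinv_sum:
  assumes "b > 0" "\<And>i. i \<in> I \<Longrightarrow> f i \<in> Zinv b" shows "sum f I \<in> Zinv b"
  using assms(2) by (induction I rule: infinite_finite_induct) (auto intro: Zinv_add[OF assms(1)])

lemma Zinv_p_adic_zero:
  assumes b: "b > 0" and p: "prime p" "\<not> p dvd b" and r: "r \<in> Zinv b"
    and all: "\<forall>t. \<exists>s\<in>Zinv b. r = of_nat (p ^ t) * s"
  shows "r = 0"
proof -
  obtain z n where rz: "r = of_int z / of_nat (b ^ n)" using r unfolding Zinv_def by blast
  have "nat \<bar>z\<bar> < p ^ nat \<bar>z\<bar>"
    using less_exp[of "nat \<bar>z\<bar>"] power_mono[of 2 p "nat \<bar>z\<bar>"] prime_ge_2_nat[OF p(1)] by linarith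
  then obtain t where t: "nat \<bar>z\<bar> < p ^ t" by blast
  obtain s where s: "s \<in> Zinv b" "r = of_nat (p ^ t) * s" using all by blast
  obtain w m where sw: "s = of_int w / of_nat (b ^ m)" using s(1) unfolding Zinv_def by blast
  have "of_int z / of_nat (b ^ n) = (of_nat (p ^ t) * of_int w / of_nat (b ^ m) :: rat)"
    using s(2) rz sw by simp
  then have "(of_int (z * int b ^ m) :: rat) = of_int (int p ^ t * w * int b ^ n)"
    using b by (simp add: field_simps)
  then have eq: "z * int b ^ m = int p ^ t * w * int b ^ n" by (simp only: of_int_eq_iff)
  have "int p ^ t dvd z * int b ^ m" unfolding eq by simp
  moreover have "coprime (int p ^ t) (int b ^ m)"
    using p by (simp add: prime_imp_coprime_nat coprime_power_left_iff coprime_power_right_iff)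
  ultimately have "int p ^ t dvd z" using coprime_dvd_mult_left_iff by blast
  then have "z = 0 \<or> int p ^ t \<le> \<bar>z\<bar>" using dvd_imp_le_int by force
  moreover have "\<bar>z\<bar> < int p ^ t" using t by (metis int_nat_eq abs_ge_zero of_nat_less_iff of_nat_power)
  ultimately have "z = 0" by linarith
  then show ?thesis using rz by simp
qed

lemma Zinv_poly_add: "b > 0 \<Longrightarrow> Zinv_poly b P \<Longrightarrow> Zinv_poly b Q \<Longrightarrow> Zinv_poly b (P + Q)"
  unfolding Zinv_poly_def by (auto intro: Zinv_add)
lemma Zinv_poly_diff: "b > 0 \<Longrightarrow> Zinv_poly b P \<Longrightarrow> Zinv_poly b Q \<Longrightarrow> Zinv_poly b (P - Q)"
  unfolding Zinv_poly_def by (auto intro: Zinv_diff)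
lemma Zinv_poly_uminus: "Zinv_poly b P \<Longrightarrow> Zinv_poly b (- P)"
  unfolding Zinv_poly_def by (auto intro: Zinv_uminus)
lemma Zinv_poly_mult: "b > 0 \<Longrightarrow> Zinv_poly b P \<Longrightarrow> Zinv_poly b Q \<Longrightarrow> Zinv_poly b (P * Q)"
  unfolding Zinv_poly_def coeff_mult by (auto intro!: Zinv_sum Zinv_mult)
lemma Zinv_poly_0 [simp]: "Zinv_poly b 0" unfolding Zinv_poly_def by simp
lemma Zinv_poly_1 [simp]: "Zinv_poly b 1" unfolding Zinv_poly_def by (simp add: coeff_1)
lemma Zinv_poly_smult_nat [simp]: "Zinv_poly b P \<Longrightarrow> Zinv_poly b (smult (of_nat c) P)"
  unfolding Zinv_poly_def using Zinv_mult[OF Zinv_of_int[of "int c"]] by simp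
lemma Zinv_poly_of_nat [simp]: "Zinv_poly b (of_nat n)"
  using Zinv_poly_smult_nat[OF Zinv_poly_1, of b n] by (simp add: of_nat_poly)
lemma Zinv_poly_monom: "c \<in> Zinv b \<Longrightarrow> Zinv_poly b (monom c n)"
  unfolding Zinv_poly_def by (simp add: coeff_monom)
lemma Zinv_poly_monom_1 [simp]: "Zinv_poly b (monom 1 n)"
  by (simp add: Zinv_poly_monom)
lemma Zinv_poly_power: "b > 0 \<Longrightarrow> Zinv_poly b P \<Longrightarrow> Zinv_poly b (P ^ n)"
  by (induction n) (auto intro: Zinv_poly_mult)
lemma Zinv_poly_sum:
  assumes "b > 0" "\<And>i. i \<in> I \<Longrightarrow> Zinv_poly b (f i)" shows "Zinv_poly b (sum f I)"
  using assms(2) by (induction I rule: infinite_finite_induct) (auto intro: Zinv_poly_add[OF assms(1)])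
lemma Zinv_poly_prod:
  assumes "b > 0" "\<And>i. i \<in> I \<Longrightarrow> Zinv_poly b (f i)" shows "Zinv_poly b (prod f I)"
  using assms(2) by (induction I rule: infinite_finite_induct) (auto intro: Zinv_poly_mult[OF assms(1)])

lemmas Zinv_poly_intros = Zinv_poly_add Zinv_poly_diff Zinv_poly_uminus Zinv_poly_mult
  Zinv_poly_power Zinv_poly_sum Zinv_poly_prod Zinv_poly_smult_nat

lemma Zinv_poly_one_minus_monom [simp]: "Zinv_poly b (1 - monom 1 n)"
proof -
  have "coeff (1 - monom (1::rat) n) i \<in> {0, 1, -1}" for i
    by (auto simp add: coeff_1 coeff_monom)
  then show ?thesis unfolding Zinv_poly_def using Zinv_uminus[OF Zinv_1] by auto
qed

lemma qpoch_Zinv: "b > 0 \<Longrightarrow> Zinv_poly b (qpoch k)"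
  unfolding qpoch_def by (intro Zinv_poly_intros) auto

lemma Zinv_dvd_add: "b > 0 \<Longrightarrow> Zinv_dvd b D P \<Longrightarrow> Zinv_dvd b D Q \<Longrightarrow> Zinv_dvd b D (P + Q)"
  unfolding Zinv_dvd_def by (metis Zinv_poly_add distrib_left)
lemma Zinv_dvd_diff: "b > 0 \<Longrightarrow> Zinv_dvd b D P \<Longrightarrow> Zinv_dvd b D Q \<Longrightarrow> Zinv_dvd b D (P - Q)"
  unfolding Zinv_dvd_def by (metis Zinv_poly_diff right_diff_distrib)
lemma Zinv_dvd_trans: "b > 0 \<Longrightarrow> Zinv_dvd b D E \<Longrightarrow> Zinv_dvd b E P \<Longrightarrow> Zinv_dvd b D P"
  unfolding Zinv_dvd_def by (metis Zinv_poly_mult mult.assoc)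
lemma Zinv_dvd_imp_dvd: "Zinv_dvd b D P \<Longrightarrow> D dvd P"
  unfolding Zinv_dvd_def by auto

text \<open>A polynomial with constant coefficient 1 is a unit in Z[1/b][[q]]; hence its
  cofactor in a product with coefficients in Z[1/b] also has coefficients in Z[1/b]
  (solve for the coefficients of H one at a time).\<close>

lemma Zinv_poly_cofactor:
  assumes b: "b > 0" and D: "Zinv_poly b D" "coeff D 0 = 1" and DH: "Zinv_poly b (D * H)"
  shows "Zinv_poly b H"
proof -
  have "\<forall>m<n. coeff H m \<in> Zinv b" for n
  proof (induction n)
    case (Suc n)
    have "{..n} = insert 0 {1..n}" by auto
    then have "coeff (D * H) n = coeff D 0 * coeff H n + (\<Sum>i\<in>{1..n}. coeff D i * coeff H (n - i))"
      by (simp add: coeff_mult sum.insert)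
    then have eq: "coeff H n = coeff (D * H) n - (\<Sum>i\<in>{1..n}. coeff D i * coeff H (n - i))"
      using D(2) by simp
    have "coeff H n \<in> Zinv b"
      unfolding eq using DH D(1) Suc.IH unfolding Zinv_poly_def
      by (intro Zinv_diff[OF b] Zinv_sum[OF b] Zinv_mult) auto
    then show ?case using Suc.IH less_Suc_eq by auto
  qed simp
  then show ?thesis unfolding Zinv_poly_def by blast
qed

lemma Zinv_dvd_if_dvd:
  assumes b: "b > 0" and D: "Zinv_poly b D" "coeff D 0 = 1" and P: "Zinv_poly b P" and dvd: "D dvd P"
  shows "Zinv_dvd b D P"
proof -
  obtain H where "P = D * H" using dvd by blast
  then show ?thesis unfolding Zinv_dvd_def using Zinv_poly_cofactor[OF b D] P by auto
qed

definition reduced :: "rat poly \<Rightarrow> rat poly \<Rightarrow> bool" where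
  "reduced D R \<longleftrightarrow> (\<forall>n\<ge>degree D. coeff R n = 0)"

lemma reduced_mult_zero:
  assumes "D \<noteq> 0" "reduced D (D * K)" shows "K = 0"
proof (rule ccontr)
  assume K: "K \<noteq> 0"
  have "coeff (D * K) (degree D + degree K) = lead_coeff D * lead_coeff K"
    by (simp add: coeff_mult_degree_sum)
  also have "\<dots> \<noteq> 0" using assms K by simp
  finally show False using assms(2) unfolding reduced_def by auto
qed

lemma Zinv_div_mod:
  assumes b: "b > 0" and D: "Zinv_poly b D" "lead_coeff D = 1 \<or> lead_coeff D = -1"
    and P: "Zinv_poly b P"
  shows "\<exists>X R. Zinv_poly b X \<and> Zinv_poly b R \<and> P = D * X + R \<and> reduced D R"
  using P
proof (induction "degree P" arbitrary: P rule: less_induct)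
  case less
  show ?case
  proof (cases "reduced D P")
    case True
    then show ?thesis using less.prems by (intro exI[of _ 0] exI[of _ P]) auto
  next
    case False
    then obtain n where n: "n \<ge> degree D" "coeff P n \<noteq> 0" unfolding reduced_def by auto
    then have dP: "degree P \<ge> degree D" using le_degree order.trans by blast
    define c where "c = lead_coeff P * lead_coeff D"
    define S where "S = monom c (degree P - degree D)"
    text \<open>Subtracting S * D cancels the leading term of P.\<close>
    have cZ: "c \<in> Zinv b" unfolding c_def using less.prems D(1) unfolding Zinv_poly_def
      by (intro Zinv_mult) auto
    then have SZ: "Zinv_poly b S" unfolding S_def by (rule Zinv_poly_monom)
    have "degree (S * D) \<le> degree S + degree D" by (rule degree_mult_le)
    also have "\<dots> \<le> (degree P - degree D) + degree D"
      unfolding S_def using degree_monom_le by (intro add_mono) auto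
    also have "\<dots> = degree P" using dP by simp
    finally have degSD: "degree (S * D) \<le> degree P" .
    have "coeff (S * D) (degree P) = c * lead_coeff D"
      unfolding S_def using dP by (simp add: coeff_monom_mult)
    also have "\<dots> = lead_coeff P" unfolding c_def using D(2) by auto
    finally have top: "coeff (S * D) (degree P) = lead_coeff P" .
    have high: "coeff (P - S * D) m = 0" if "m \<ge> degree P" for m
      using that top degSD by (cases "m = degree P") (auto simp: coeff_eq_0)
    have "P - S * D = 0 \<or> degree (P - S * D) < degree P"
    proof (cases "P - S * D = 0")
      case False
      have "degree (P - S * D) \<le> degree P" using high by (intro degree_le) auto
      moreover have "degree (P - S * D) \<noteq> degree P"
        using high[of "degree (P - S * D)"] False by (metis leading_coeff_0_iff order_refl)
      ultimately show ?thesis by simp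
    qed simp
    then obtain X R where XR: "Zinv_poly b X" "Zinv_poly b R" "P - S * D = D * X + R" "reduced D R"
    proof
      assume "P - S * D = 0" then show ?thesis using that[of 0 0] unfolding reduced_def by simp
    next
      assume "degree (P - S * D) < degree P"
      then show ?thesis using less.hyps less.prems D(1) SZ b that by (blast intro: Zinv_poly_intros)
    qed
    have "P = D * (X + S) + R" using XR(3) by (simp add: algebra_simps)
    then show ?thesis using XR SZ by (blast intro: Zinv_poly_add b)
  qed
qed

text \<open>"in_ideal b D m P": P lies in the ideal (D, m) of Z[1/b][q].\<close>

definition in_ideal :: "nat \<Rightarrow> rat poly \<Rightarrow> nat \<Rightarrow> rat poly \<Rightarrow> bool" where
  "in_ideal b D m P \<longleftrightarrow> (\<exists>X Y. Zinv_poly b X \<and> Zinv_poly b Y \<and> P = D * X + smult (of_nat m) Y)"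

text \<open>Reduce P modulo D; the remainder
  is divisible by every p^t, hence vanishes by p-adic separation of Z[1/b].\<close>

lemma separation:
  assumes b: "b > 0" and p: "prime p" "\<not> p dvd b"
    and D: "Zinv_poly b D" "lead_coeff D = 1 \<or> lead_coeff D = -1"
    and P: "Zinv_poly b P" and all: "\<And>t. in_ideal b D (p ^ t) P"
  shows "Zinv_dvd b D P"
proof -
  have D0: "D \<noteq> 0" using D(2) by auto
  obtain X0 R where XR: "Zinv_poly b X0" "Zinv_poly b R" "P = D * X0 + R" "reduced D R"
    using Zinv_div_mod[OF b D P] by blast
  have R_div: "\<exists>R'. Zinv_poly b R' \<and> R = smult (of_nat (p ^ t)) R'" for t
  proof -
    obtain X Y where XY: "Zinv_poly b X" "Zinv_poly b Y" "P = D * X + smult (of_nat (p ^ t)) Y"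
      using all unfolding in_ideal_def by blast
    obtain Z R' where ZR: "Zinv_poly b Z" "Zinv_poly b R'" "Y = D * Z + R'" "reduced D R'"
      using Zinv_div_mod[OF b D XY(2)] by blast
    have eq: "R - smult (of_nat (p ^ t)) R' = D * (X + smult (of_nat (p ^ t)) Z - X0)"
      using XR(3) XY(3) ZR(3) by (simp add: algebra_simps smult_add_right)
    moreover have "reduced D (R - smult (of_nat (p ^ t)) R')"
      using XR(4) ZR(4) unfolding reduced_def by simp
    ultimately have "X + smult (of_nat (p ^ t)) Z - X0 = 0" using reduced_mult_zero[OF D0] by metis
    then show ?thesis using eq ZR(2) by auto
  qed
  have "coeff R n = 0" for n
  proof (rule Zinv_p_adic_zero[OF b p])
    show "coeff R n \<in> Zinv b" using XR(2) unfolding Zinv_poly_def by blast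
    show "\<forall>t. \<exists>s\<in>Zinv b. coeff R n = of_nat (p ^ t) * s"
      using R_div unfolding Zinv_poly_def by (metis coeff_smult)
  qed
  then have "R = 0" by (simp add: poly_eqI)
  then show ?thesis unfolding Zinv_dvd_def using XR by auto
qed

lemma in_ideal_mult:
  assumes b: "b > 0" and P: "in_ideal b D m P" and H: "Zinv_poly b H"
  shows "in_ideal b D m (P * H)"
proof -
  obtain X Y where XY: "Zinv_poly b X" "Zinv_poly b Y" "P = D * X + smult (of_nat m) Y"
    using P unfolding in_ideal_def by blast
  have "P * H = D * (X * H) + smult (of_nat m) (Y * H)" using XY(3) by (simp add: algebra_simps)
  then show ?thesis unfolding in_ideal_def using XY H b by (blast intro: Zinv_poly_mult)
qed

lemma in_ideal_times:
  assumes b: "b > 0" and P: "in_ideal b D m P" and Q: "in_ideal b D m' Q" and D: "Zinv_poly b D"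
  shows "in_ideal b D (m * m') (P * Q)"
proof -
  obtain X Y where XY: "Zinv_poly b X" "Zinv_poly b Y" "P = D * X + smult (of_nat m) Y"
    using P unfolding in_ideal_def by blast
  obtain X' Y' where XY': "Zinv_poly b X'" "Zinv_poly b Y'" "Q = D * X' + smult (of_nat m') Y'"
    using Q unfolding in_ideal_def by blast
  have "P * Q = D * (X * Q + smult (of_nat m) (Y * X')) + smult (of_nat (m * m')) (Y * Y')"
    unfolding XY(3) XY'(3) by (simp add: algebra_simps smult_add_right mult_smult_right)
  moreover have "Zinv_poly b (X * Q + smult (of_nat m) (Y * X'))"
    using XY XY' D b unfolding XY'(3) by (intro Zinv_poly_intros) auto
  ultimately show ?thesis unfolding in_ideal_def using XY XY' b by (blast intro: Zinv_poly_mult)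
qed

lemma in_ideal_power:
  assumes b: "b > 0" and P: "in_ideal b D m P" "Zinv_poly b P" and "k > 0"
  shows "in_ideal b D m (P ^ k)"
  using \<open>k > 0\<close>
proof (induction k rule: nat_induct_non_zero)
  case (Suc k)
  have "in_ideal b D m (P ^ k * P)" by (rule in_ideal_mult[OF b Suc.IH P(2)])
  then show ?case by (simp only: power_Suc2)
qed (use P in simp)

lemma in_ideal_diff_multiple:
  assumes b: "b > 0" and P: "in_ideal b D m P" and Q: "Zinv_dvd b D Q"
  shows "in_ideal b D m (P - Q)"
proof -
  obtain X Y where XY: "Zinv_poly b X" "Zinv_poly b Y" "P = D * X + smult (of_nat m) Y"
    using P unfolding in_ideal_def by blast
  obtain K where K: "Zinv_poly b K" "Q = D * K" using Q unfolding Zinv_dvd_def by blast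
  have "P - Q = D * (X - K) + smult (of_nat m) Y" using XY(3) K(2) by (simp add: algebra_simps)
  then show ?thesis unfolding in_ideal_def using XY K b by (blast intro: Zinv_poly_diff)
qed

lemma in_ideal_shrink:
  assumes b: "b > 0" and D: "Zinv_dvd b D E" and P: "in_ideal b E m P"
  shows "in_ideal b D m P"
proof -
  obtain X Y where XY: "Zinv_poly b X" "Zinv_poly b Y" "P = E * X + smult (of_nat m) Y"
    using P unfolding in_ideal_def by blast
  obtain K where K: "Zinv_poly b K" "E = D * K" using D unfolding Zinv_dvd_def by blast
  have "P = D * (K * X) + smult (of_nat m) Y" using XY(3) K(2) by (simp add: mult.assoc)
  then show ?thesis unfolding in_ideal_def using XY K b by (blast intro: Zinv_poly_mult)
qed

lemma in_ideal_cong: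
  assumes b: "b > 0" and Q: "in_ideal b D m Q" and R: "Zinv_poly b R"
    and PQ: "P = Q + smult (of_nat m) R"
  shows "in_ideal b D m P"
proof -
  obtain X Y where XY: "Zinv_poly b X" "Zinv_poly b Y" "Q = D * X + smult (of_nat m) Y"
    using Q unfolding in_ideal_def by blast
  have "P = D * X + smult (of_nat m) (Y + R)" using PQ XY(3) by (simp add: smult_add_right)
  then show ?thesis unfolding in_ideal_def using XY R b by (blast intro: Zinv_poly_add)
qed

lemma power_sum_split:
  assumes b: "b > 0" and a: "Zinv_poly b a" and c: "Zinv_poly b c"
  shows "\<exists>X Y. Zinv_poly b X \<and> Zinv_poly b Y \<and> (a + c) ^ (e + t) = a ^ e * X + c ^ (t + 1) * Y"
proof (induction t arbitrary: e)
  case 0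
  show ?case
  proof (induction e)
    case 0 then show ?case by (intro exI[of _ 1] exI[of _ 0]) auto
  next
    case (Suc e)
    then obtain X Y where XY: "Zinv_poly b X" "Zinv_poly b Y" "(a + c) ^ e = a ^ e * X + c * Y" by auto
    have "(a + c) ^ Suc e = (a + c) * (a ^ e * X + c * Y)" by (simp only: power_Suc XY(3))
    also have "\<dots> = a ^ Suc e * X + c * (a ^ e * X + (a + c) * Y)"
      by (simp add: distrib_left distrib_right mult.assoc mult.left_commute)
    finally have "(a + c) ^ Suc e = a ^ Suc e * X + c * (a ^ e * X + (a + c) * Y)" .
    moreover have "Zinv_poly b (a ^ e * X + (a + c) * Y)"
      using XY a c b by (intro Zinv_poly_intros) auto
    ultimately show ?case using XY(1) by auto
  qed
next
  case (Suc t)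
  note outer_IH = Suc.IH
  show ?case
  proof (induction e)
    case 0
    have "Zinv_poly b ((a + c) ^ Suc t)" using a c b by (intro Zinv_poly_intros)
    then show ?case by (intro exI[of _ "(a + c) ^ Suc t"] exI[of _ 0]) auto
  next
    case (Suc e)
    then obtain X Y where XY: "Zinv_poly b X" "Zinv_poly b Y"
      "(a + c) ^ (e + Suc t) = a ^ e * X + c ^ (Suc t + 1) * Y" by blast
    obtain X' Y' where XY': "Zinv_poly b X'" "Zinv_poly b Y'"
      "(a + c) ^ (Suc e + t) = a ^ Suc e * X' + c ^ (t + 1) * Y'"
      using outer_IH by blast
    have "(a + c) ^ (Suc e + Suc t) = (a + c) ^ (e + Suc t) * a + (a + c) ^ (Suc e + t) * c"
      by (simp only: add_Suc add_Suc_right power_Suc2 distrib_left)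
    also have "\<dots> = a ^ Suc e * (X + X' * c) + c ^ (Suc t + 1) * (Y * a + Y')"
      unfolding XY(3) XY'(3) by (simp add: distrib_left distrib_right mult.assoc mult.commute mult.left_commute)
    finally have "(a + c) ^ (Suc e + Suc t) = a ^ Suc e * (X + X' * c) + c ^ (Suc t + 1) * (Y * a + Y')" .
    moreover have "Zinv_poly b (X + X' * c)" "Zinv_poly b (Y * a + Y')"
      using XY XY' a c b by (intro Zinv_poly_intros; simp)+
    ultimately show ?case by blast
  qed
qed

lemma in_ideal_power_split:
  assumes b: "b > 0" and D: "Zinv_poly b D" and P: "in_ideal b D m P"
  shows "in_ideal b (D ^ e) (m ^ t) (P ^ (e + t))"
proof -
  obtain X Y where XY: "Zinv_poly b X" "Zinv_poly b Y" "P = D * X + smult (of_nat m) Y"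
    using P unfolding in_ideal_def by blast
  have "Zinv_poly b (D * X)" by (rule Zinv_poly_mult[OF b D XY(1)])
  moreover have "Zinv_poly b (smult (of_nat m) Y)" using XY(2) by simp
  ultimately obtain X' Y' where XY': "Zinv_poly b X'" "Zinv_poly b Y'"
    "(D * X + smult (of_nat m) Y) ^ (e + t) = (D * X) ^ e * X' + (smult (of_nat m) Y) ^ (t + 1) * Y'"
    using power_sum_split[OF b] by blast
  have first: "(D * X) ^ e * X' = D ^ e * (X ^ e * X')" by (simp add: power_mult_distrib mult.assoc)
  have second: "(smult (of_nat m) Y) ^ (t + 1) * Y' = smult (of_nat (m ^ t)) (smult (of_nat m) (Y ^ (t + 1) * Y'))"
    by (simp add: smult_power mult_smult_left)
  have "P ^ (e + t) = D ^ e * (X ^ e * X') + smult (of_nat (m ^ t)) (smult (of_nat m) (Y ^ (t + 1) * Y'))"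
    unfolding XY(3) XY'(3) first second ..
  moreover have "Zinv_poly b (X ^ e * X')" "Zinv_poly b (smult (of_nat m) (Y ^ (t + 1) * Y'))"
    using XY XY' b by (intro Zinv_poly_intros; simp)+
  ultimately show ?thesis unfolding in_ideal_def by blast
qed

lemma frobenius_cong:
  assumes b: "b > 0" and l: "prime l" "odd l" and z: "Zinv_poly b z"
  shows "\<exists>w. Zinv_poly b w \<and> (1 - z) ^ l = 1 - z ^ l + smult (of_nat l) w"
proof -
  define w where "w = (\<Sum>k\<in>{1..l-1}. of_nat ((l choose k) div l) * (- z) ^ k)"
  have l1: "l > 1" using l prime_gt_1_nat by blast
  have wZ: "Zinv_poly b w" unfolding w_def using z b
    by (intro Zinv_poly_intros) auto
  have "(1 - z) ^ l = ((- z) + 1) ^ l" by simp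
  also have "\<dots> = (\<Sum>k\<le>l. of_nat (l choose k) * (- z) ^ k)"
    unfolding binomial_ring by simp
  also have "{..l} = insert 0 (insert l {1..l-1})" using l1 by auto
  also have "(\<Sum>k\<in>insert 0 (insert l {1..l-1}). of_nat (l choose k) * (- z) ^ k)
     = 1 + ((- z) ^ l + (\<Sum>k\<in>{1..l-1}. of_nat (l choose k) * (- z) ^ k))"
    using l1 by (subst sum.insert; simp)+
  also have "(\<Sum>k\<in>{1..l-1}. of_nat (l choose k) * (- z) ^ k) = of_nat l * w"
    unfolding w_def sum_distrib_left
  proof (intro sum.cong refl)
    fix k assume k: "k \<in> {1..l-1}"
    have "l dvd (l choose k)" using k l1 by (intro dvd_choose_prime l) auto
    then have "(of_nat (l choose k) :: rat poly) = of_nat l * of_nat ((l choose k) div l)"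
      by (metis dvd_mult_div_cancel of_nat_mult)
    then show "of_nat (l choose k) * (- z) ^ k = of_nat l * (of_nat ((l choose k) div l) * (- z) ^ k)"
      by (simp add: mult.assoc)
  qed
  also have "(- z) ^ l = - (z ^ l)" using l(2) by simp
  finally have "(1 - z) ^ l = 1 - z ^ l + smult (of_nat l) w"
    by (simp add: of_nat_poly)
  then show ?thesis using wZ by blast
qed

lemma power_cong:
  assumes b: "b > 0" and a: "Zinv_poly b a" and u: "Zinv_poly b u"
  shows "\<exists>v. Zinv_poly b v \<and> (a + smult (of_nat l) u) ^ n = a ^ n + smult (of_nat l) v"
proof (induction n)
  case (Suc n)
  then obtain v where v: "Zinv_poly b v" "(a + smult (of_nat l) u) ^ n = a ^ n + smult (of_nat l) v"
    by blast
  have "(a + smult (of_nat l) u) ^ Suc n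
      = a ^ Suc n + smult (of_nat l) (u * a ^ n + a * v + smult (of_nat l) (u * v))"
    using v(2) by (simp add: algebra_simps smult_add_right)
  moreover have "Zinv_poly b (u * a ^ n + a * v + smult (of_nat l) (u * v))"
    using a u v(1) b by (intro Zinv_poly_intros) auto
  ultimately show ?case by blast
qed (intro exI[of _ 0], simp)

lemma frobenius_iter:
  assumes b: "b > 0" and p: "prime p" "odd p"
  shows "\<exists>v. Zinv_poly b v \<and> (1 - monom 1 c) ^ (p ^ i) = 1 - monom 1 (c * p ^ i) + smult (of_nat p) v"
proof (induction i)
  case (Suc i)
  then obtain v where v: "Zinv_poly b v"
    "(1 - monom 1 c) ^ (p ^ i) = 1 - monom 1 (c * p ^ i) + smult (of_nat p) v"
    by blast
  obtain v' where v': "Zinv_poly b v'"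
    "(1 - monom 1 (c * p ^ i) + smult (of_nat p) v) ^ p = (1 - monom 1 (c * p ^ i)) ^ p + smult (of_nat p) v'"
    using power_cong[OF b Zinv_poly_one_minus_monom v(1)] by blast
  obtain w where w: "Zinv_poly b w"
    "(1 - monom 1 (c * p ^ i)) ^ p = 1 - monom 1 (c * p ^ i) ^ p + smult (of_nat p) w"
    using frobenius_cong[OF b p Zinv_poly_monom_1] by blast
  have "(1 - monom 1 c) ^ (p ^ Suc i) = ((1 - monom 1 c) ^ (p ^ i)) ^ p"
    by (simp add: power_mult[symmetric] mult.commute)
  also have "\<dots> = 1 - monom 1 (c * p ^ Suc i) + smult (of_nat p) (w + v')"
    unfolding v(2) v'(2) w(2) by (simp add: monom_power mult_ac smult_add_right)
  finally show ?case using v'(1) w(1) Zinv_poly_add[OF b] by blast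
qed (intro exI[of _ 0], simp)

abbreviation Cpoly :: "rat poly \<Rightarrow> complex poly" where
  "Cpoly P \<equiv> map_poly of_rat P"

lemma Cpoly_eq_0_iff [simp]: "Cpoly P = 0 \<longleftrightarrow> P = 0"
  by (simp add: map_poly_eq_0_iff)
lemma degree_Cpoly [simp]: "degree (Cpoly P) = degree P"
  by (simp add: degree_map_poly)
lemma Cpoly_add [simp]: "Cpoly (P + Q) = Cpoly P + Cpoly Q"
  by (intro poly_eqI) (simp add: coeff_map_poly of_rat_add)
lemma Cpoly_diff [simp]: "Cpoly (P - Q) = Cpoly P - Cpoly Q"
  by (intro poly_eqI) (simp add: coeff_map_poly of_rat_diff)
lemma Cpoly_mult [simp]: "Cpoly (P * Q) = Cpoly P * Cpoly Q"
  by (intro poly_eqI) (simp add: coeff_map_poly coeff_mult of_rat_sum of_rat_mult)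
lemma Cpoly_monom [simp]: "Cpoly (monom c n) = monom (of_rat c) n"
  by (simp add: map_poly_monom)
lemma Cpoly_power [simp]: "Cpoly (P ^ n) = Cpoly P ^ n"
  by (induction n) auto
lemma Cpoly_prod [simp]: "Cpoly (prod f I) = (\<Prod>i\<in>I. Cpoly (f i))"
  by (induction I rule: infinite_finite_induct) auto
lemma Cpoly_sum [simp]: "Cpoly (sum f I) = (\<Sum>i\<in>I. Cpoly (f i))"
  by (induction I rule: infinite_finite_induct) auto

lemma Cpoly_dvd_imp_dvd:
  assumes "Cpoly P dvd Cpoly Q" shows "P dvd Q"
proof (cases "P = 0")
  case True then show ?thesis using assms by simp
next
  case False
  have "Q = P * (Q div P) + Q mod P" by simp
  then have "Cpoly Q = Cpoly P * Cpoly (Q div P) + Cpoly (Q mod P)" by (metis Cpoly_add Cpoly_mult)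
  then have "Cpoly P dvd Cpoly (Q mod P)" using assms by (metis dvd_add_right_iff dvd_triv_left)
  moreover have "Q mod P = 0 \<or> degree (Q mod P) < degree P" using False degree_mod_less by blast
  ultimately have "Q mod P = 0"
    by (metis degree_Cpoly Cpoly_eq_0_iff dvd_imp_degree_le leD)
  then show ?thesis by (simp add: mod_eq_0_iff_dvd)
qed

lemma prod_roots_dvd:
  fixes H :: "complex poly"
  assumes "finite S" "\<forall>z\<in>S. poly H z = 0"
  shows "(\<Prod>z\<in>S. [:-z, 1:]) dvd H"
  using assms
proof (induction S arbitrary: H rule: finite_induct)
  case (insert a S)
  have "poly H a = 0" using insert.prems by simp
  then obtain H' where H': "H = [:-a, 1:] * H'" by (metis dvd_def poly_eq_0_iff_dvd)
  have "\<forall>z\<in>S. poly H' z = 0"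
  proof
    fix z assume z: "z \<in> S"
    then have "z \<noteq> a" using insert.hyps by auto
    moreover have "poly H z = 0" using z insert.prems by simp
    ultimately show "poly H' z = 0" unfolding H' by simp
  qed
  then have "(\<Prod>z\<in>S. [:-z, 1:]) dvd H'" using insert.IH by blast
  then show ?case unfolding H' by (simp only: prod.insert[OF insert.hyps]) (rule mult_dvd_mono[OF dvd_refl])
qed simp

lemma rsquarefree_dvd:
  fixes W H :: "complex poly"
  assumes W: "rsquarefree W" and roots: "\<forall>z. poly W z = 0 \<longrightarrow> poly H z = 0"
  shows "W dvd H"
proof -
  have W0: "W \<noteq> 0" using W unfolding rsquarefree_def by simp
  have fin: "finite {z. poly W z = 0}" using W0 poly_roots_finite by blast
  have "(\<Prod>z|poly W z = 0. [:-z, 1:]) dvd H" using prod_roots_dvd[OF fin] roots by simp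
  then have "smult (lead_coeff W) (\<Prod>z|poly W z = 0. [:-z, 1:]) dvd H"
    using W0 by (simp add: smult_dvd_iff)
  then show ?thesis using complex_poly_decompose_rsquarefree[OF W] by simp
qed

lemma rsquarefree_one_minus_monom:
  assumes "M > 0" shows "rsquarefree (1 - monom (1::complex) M)"
  unfolding rsquarefree_roots
proof (intro allI notI)
  fix z :: complex assume h: "poly (1 - monom 1 M) z = 0 \<and> poly (pderiv (1 - monom 1 M)) z = 0"
  then have "z ^ M = 1" by (simp add: poly_monom)
  then have "z \<noteq> 0" using assms by (cases M) auto
  moreover have "poly (pderiv (1 - monom 1 M)) z = - of_nat M * z ^ (M - 1)"
    by (simp add: pderiv_diff pderiv_monom poly_monom)
  ultimately show False using h assms by simp
qed

lemma rsquarefree_dvd_rsquarefree: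
  assumes "rsquarefree V" "W dvd V" shows "rsquarefree W"
proof -
  have V0: "V \<noteq> 0" using assms(1) rsquarefree_def by blast
  then have W0: "W \<noteq> 0" using assms(2) by auto
  have "order a W \<le> order a V" for a using dvd_imp_order_le[OF V0 assms(2)] .
  then show ?thesis using assms(1) W0 unfolding rsquarefree_def
    by (metis le_0_eq le_SucE One_nat_def)
qed

lemma coeff_0_one_minus_monom_power: "n > 0 \<Longrightarrow> coeff ((1 - monom (1::rat) n) ^ e) 0 = 1"
  by (simp add: poly_0_coeff_0[symmetric] poly_monom zero_power)

lemma lead_coeff_one_minus_monom_power:
  assumes n: "n > 0"
  shows "lead_coeff ((1 - monom (1::rat) n) ^ e) = 1 \<or> lead_coeff ((1 - monom (1::rat) n) ^ e) = -1"
proof -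
  have c: "coeff (1 - monom (1::rat) n) n = -1" using n by (simp add: coeff_1 coeff_monom)
  have "degree (1 - monom (1::rat) n) \<le> n"
    by (rule degree_le) (auto simp: coeff_1 coeff_monom)
  moreover have "n \<le> degree (1 - monom (1::rat) n)" using c by (intro le_degree) simp
  ultimately have "lead_coeff (1 - monom (1::rat) n) = -1" using c by simp
  then show ?thesis by (simp add: lead_coeff_power minus_one_power_iff)
qed

lemma qpoch_coeff_0: "coeff (qpoch k) 0 = 1"
  unfolding poly_0_coeff_0[symmetric] qpoch_def by (simp add: poly_prod poly_monom)

lemma one_minus_monom_dvd: "1 - monom (1::'a::comm_ring_1) a dvd 1 - monom 1 (a * k)"
proof -
  have "monom (1::'a) (a * k) = monom 1 a ^ k" by (simp add: monom_power)
  then show ?thesis by (simp add: one_diff_power_eq)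
qed

lemma qpoch_mono:
  assumes b: "b > 0" and "N \<le> M" shows "Zinv_dvd b (qpoch N) (qpoch M)"
proof (rule Zinv_dvd_if_dvd[OF b qpoch_Zinv[OF b] qpoch_coeff_0 qpoch_Zinv[OF b]])
  show "qpoch N dvd qpoch M" unfolding qpoch_def using assms(2)
    by (intro prod_dvd_prod_subset) auto
qed

lemma in_Rb_compat:
  assumes b: "b > 0" and h: "in_Rb b h" and "N \<le> M"
  shows "Zinv_dvd b (qpoch N) (h M - h N)"
  using assms(3)
proof (induction M rule: dec_induct)
  case base
  then show ?case unfolding Zinv_dvd_def by (intro exI[of _ 0]) simp
next
  case (step m)
  have "Zinv_dvd b (qpoch N) (h (Suc m) - h m)"
    using Zinv_dvd_trans[OF b qpoch_mono[OF b step.hyps(1)]] h unfolding in_Rb_def by blast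
  then have "Zinv_dvd b (qpoch N) ((h (Suc m) - h m) + (h m - h N))"
    using step.IH Zinv_dvd_add[OF b] by blast
  then show ?case by simp
qed

lemma in_Rb_diff:
  assumes b: "b > 0" and "in_Rb b f" "in_Rb b g" shows "in_Rb b (\<lambda>N. f N - g N)"
  unfolding in_Rb_def
proof (intro conjI allI)
  fix k
  show "Zinv_poly b (f k - g k)" using assms unfolding in_Rb_def by (auto intro: Zinv_poly_diff)
  have "Zinv_dvd b (qpoch k) ((f (Suc k) - f k) - (g (Suc k) - g k))"
    using assms unfolding in_Rb_def by (auto intro: Zinv_dvd_diff)
  then show "Zinv_dvd b (qpoch k) (f (Suc k) - g (Suc k) - (f k - g k))"
    by (simp add: algebra_simps)
qed

text \<open>For odd n, the factors 1 - q^(n(2j+1)) with j < e occur in (q;q^2)_N once N \<ge> n e,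
  so (1 - q^n)^e divides (q;q^2)_N.\<close>

lemma one_minus_monom_power_dvd_qpoch:
  assumes n: "odd n" and N: "N \<ge> n * e"
  shows "(1 - monom (1::rat) n) ^ e dvd qpoch N"
proof -
  define \<phi> where "\<phi> = (\<lambda>j. j * n + (n - 1) div 2)"
  have inj: "inj_on \<phi> {..<e}" unfolding \<phi>_def inj_on_def using n by (auto elim: oddE)
  have sub: "\<phi> ` {..<e} \<subseteq> {..<N}"
  proof
    fix i assume "i \<in> \<phi> ` {..<e}"
    then obtain j where j: "j < e" "i = j * n + (n - 1) div 2" unfolding \<phi>_def by auto
    have "j * n + (n - 1) div 2 < j * n + n" using n by (cases n) auto
    also have "j * n + n \<le> e * n" using j(1) by (metis Suc_leI add.commute mult_Suc mult_le_mono1)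
    finally show "i \<in> {..<N}" using j N by (simp add: mult.commute)
  qed
  have "(1 - monom (1::rat) n) ^ e = (\<Prod>j<e. 1 - monom 1 n)" by simp
  also have "\<dots> dvd (\<Prod>j<e. 1 - monom 1 (2 * \<phi> j + 1))"
  proof (intro prod_dvd_prod)
    fix j
    have "2 * \<phi> j + 1 = n * (2 * j + 1)" unfolding \<phi>_def using n by (auto elim!: oddE simp: algebra_simps)
    then show "1 - monom (1::rat) n dvd 1 - monom 1 (2 * \<phi> j + 1)" using one_minus_monom_dvd by metis
  qed
  also have "(\<Prod>j<e. 1 - monom 1 (2 * \<phi> j + 1)) = (\<Prod>i\<in>\<phi> ` {..<e}. 1 - monom (1::rat) (2 * i + 1))"
    using prod.reindex[OF inj, of "\<lambda>i. 1 - monom (1::rat) (2 * i + 1)"] by (simp add: o_def)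
  also have "\<dots> dvd qpoch N" unfolding qpoch_def using sub by (intro prod_dvd_prod_subset) auto
  finally show ?thesis .
qed

lemma one_minus_monom_power_Zinv_dvd_qpoch:
  assumes b: "b > 0" and n: "odd n" and N: "N \<ge> n * e"
  shows "Zinv_dvd b ((1 - monom 1 n) ^ e) (qpoch N)"
proof (rule Zinv_dvd_if_dvd[OF b _ _ qpoch_Zinv[OF b] one_minus_monom_power_dvd_qpoch[OF n N]])
  show "Zinv_poly b ((1 - monom 1 n) ^ e)" using b by (simp add: Zinv_poly_power)
  have "n > 0" using n by (cases n) auto
  then show "coeff ((1 - monom (1::rat) n) ^ e) 0 = 1" by (rule coeff_0_one_minus_monom_power)
qed

text \<open>If h vanishes at a root of unity \<xi> of odd order m at level m, it vanishes there at every
  level N > m/2: both h m and h N are congruent modulo (q;q^2)_K, K = min N m, whose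
  factor 1 - q^m vanishes at \<xi>.\<close>

lemma in_Rb_vanish:
  assumes b: "b > 0" and h: "in_Rb b h" and ord: "root_of_unity_order \<xi> m" "odd m"
    and hm: "poly (Cpoly (h m)) \<xi> = 0" and mN: "m < 2 * N"
  shows "poly (Cpoly (h N)) \<xi> = 0"
proof -
  define K where "K = min N m"
  have "\<xi> ^ m = 1" using ord(1) unfolding root_of_unity_order_def by auto
  moreover obtain i where i: "m = 2 * i + 1" using ord(2) by (auto elim: oddE)
  moreover have "i < K" unfolding K_def using i mN by auto
  ultimately have qK: "poly (Cpoly (qpoch K)) \<xi> = 0"
    unfolding qpoch_def by (auto simp: poly_prod poly_monom intro!: prod_zero)
  have "poly (Cpoly (h M - h K)) \<xi> = 0" if KM: "K \<le> M" for M
  proof -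
    obtain H where "h M - h K = qpoch K * H"
      using in_Rb_compat[OF b h KM] unfolding Zinv_dvd_def by blast
    then have "poly (Cpoly (h M - h K)) \<xi> = poly (Cpoly (qpoch K)) \<xi> * poly (Cpoly H) \<xi>"
      by (simp only: Cpoly_mult poly_mult)
    then show ?thesis using qK by simp
  qed
  from this[of N] this[of m] show ?thesis using hm unfolding K_def by simp
qed

text \<open>The polynomial W = (1 - q^(c p^j)) / (1 - q^c), written as a product of the geometric
  sums 1 + x + ... + x^(p-1) at x = q^(c p^i), i < j.\<close>

definition geom :: "nat \<Rightarrow> rat poly \<Rightarrow> rat poly" where
  "geom p z = (\<Sum>k<p. z ^ k)"

definition W :: "nat \<Rightarrow> nat \<Rightarrow> nat \<Rightarrow> rat poly" where
  "W p c j = (\<Prod>i<j. geom p (monom 1 (c * p ^ i)))"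

lemma geom_Zinv: "b > 0 \<Longrightarrow> Zinv_poly b z \<Longrightarrow> Zinv_poly b (geom p z)"
  unfolding geom_def by (intro Zinv_poly_intros) auto

lemma geom_mult: "(1 - z) * geom p z = 1 - z ^ p"
  unfolding geom_def by (simp add: one_diff_power_eq)

text \<open>Modulo p, the geometric sum is (1 - x)^(p-1), by the Frobenius congruence.\<close>

lemma geom_cong:
  assumes b: "b > 0" and p: "prime p" "odd p" and m: "m > 0"
  shows "\<exists>u. Zinv_poly b u \<and> geom p (monom 1 m) = (1 - monom 1 m) ^ (p - 1) + smult (of_nat p) u"
proof -
  define z where "z = (monom 1 m :: rat poly)"
  obtain w where w: "Zinv_poly b w" "(1 - z) ^ p = 1 - z ^ p + smult (of_nat p) w"
    using frobenius_cong[OF b p] Zinv_poly_monom_1 unfolding z_def by blast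
  have p1: "p \<ge> 1" using prime_gt_1_nat[OF p(1)] by simp
  have "(1 - z) ^ p = (1 - z) * (1 - z) ^ (p - 1)"
    using p1 by (metis power_eq_if not_one_le_zero)
  then have eq: "smult (of_nat p) w = (1 - z) * ((1 - z) ^ (p - 1) - geom p z)"
    using w(2) geom_mult[of z p] by (simp add: algebra_simps)
  then have "(1 - z) dvd smult (of_nat p) w" by simp
  then have "(1 - z) dvd w" using p1 by (simp add: dvd_smult_cancel)
  moreover have "coeff (1 - z) 0 = 1" using coeff_0_one_minus_monom_power[OF m, of 1] unfolding z_def by simp
  ultimately have "Zinv_dvd b (1 - z) w"
    using Zinv_dvd_if_dvd[OF b _ _ w(1)] unfolding z_def by simp
  then obtain u where u: "Zinv_poly b u" "w = (1 - z) * u" unfolding Zinv_dvd_def by blast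
  have "1 - z \<noteq> 0" using \<open>coeff (1 - z) 0 = 1\<close> by auto
  moreover have "(1 - z) * ((1 - z) ^ (p - 1) - geom p z) = (1 - z) * smult (of_nat p) u"
    by (simp only: mult_smult_right u(2)[symmetric] eq)
  ultimately have "(1 - z) ^ (p - 1) - geom p z = smult (of_nat p) u" using mult_left_cancel by blast
  then have "geom p z = (1 - z) ^ (p - 1) + smult (of_nat p) (- u)" by (simp add: algebra_simps)
  then show ?thesis using u(1) Zinv_poly_uminus unfolding z_def by blast
qed

lemma W_mult: "(1 - monom 1 c) * W p c j = 1 - monom 1 (c * p ^ j)"
proof (induction j)
  case (Suc j)
  have "(1 - monom 1 c) * W p c (Suc j) = ((1 - monom 1 c) * W p c j) * geom p (monom 1 (c * p ^ j))"
    by (simp add: W_def mult_ac)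
  also have "\<dots> = 1 - monom 1 (c * p ^ j) ^ p" unfolding Suc.IH geom_mult ..
  also have "\<dots> = 1 - monom 1 (c * p ^ Suc j)" by (simp add: monom_power mult_ac)
  finally show ?case .
qed (simp add: W_def)

lemma W_Zinv: "b > 0 \<Longrightarrow> Zinv_poly b (W p c j)"
  unfolding W_def by (intro Zinv_poly_prod geom_Zinv) auto

lemma W_coeff_0:
  assumes "c > 0" "p > 0" shows "coeff (W p c j) 0 = 1"
proof -
  have "(\<Sum>k<p. (0::rat) ^ k) = 1" using \<open>p > 0\<close>
    by (cases p) (simp_all del: sum.lessThan_Suc add: sum.lessThan_Suc_shift)
  then show ?thesis unfolding poly_0_coeff_0[symmetric] W_def geom_def using assms
    by (simp add: poly_prod poly_sum poly_monom zero_power)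
qed

text \<open>Each factor with i \<ge> e lies in ((1 - q^c)^e, p): modulo p it equals
  (1 - q^(c p^i))^(p-1) = (1 - q^c)^(p^i (p-1)), and p^i (p-1) \<ge> e.\<close>

lemma geom_in_ideal:
  assumes b: "b > 0" and p: "prime p" "odd p" and c: "c > 0" and ie: "i \<ge> e"
  shows "in_ideal b ((1 - monom 1 c) ^ e) p (geom p (monom 1 (c * p ^ i)))"
proof -
  have p2: "p \<ge> 2" using prime_ge_2_nat[OF p(1)] .
  obtain u where u: "Zinv_poly b u"
    "geom p (monom 1 (c * p ^ i)) = (1 - monom 1 (c * p ^ i)) ^ (p - 1) + smult (of_nat p) u"
    using geom_cong[OF b p, of "c * p ^ i"] c p2 by auto
  obtain v where v: "Zinv_poly b v"
    "(1 - monom 1 c) ^ (p ^ i) = 1 - monom 1 (c * p ^ i) + smult (of_nat p) v"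
    using frobenius_iter[OF b p] by blast
  have "in_ideal b ((1 - monom 1 c) ^ (p ^ i)) p (1 - monom 1 (c * p ^ i))"
    unfolding in_ideal_def using v by (intro exI[of _ 1] exI[of _ "- v"]) (auto simp: Zinv_poly_uminus)
  moreover have "Zinv_dvd b ((1 - monom 1 c) ^ e) ((1 - monom 1 c) ^ (p ^ i))"
  proof -
    have "e \<le> p ^ i" using less_exp[of i] power_mono[of 2 p i] p2 ie by linarith
    then show ?thesis unfolding Zinv_dvd_def using b
      by (intro exI[of _ "(1 - monom 1 c) ^ (p ^ i - e)"]) (simp add: Zinv_poly_power power_add[symmetric])
  qed
  ultimately have "in_ideal b ((1 - monom 1 c) ^ e) p (1 - monom 1 (c * p ^ i))"
    by (rule in_ideal_shrink[OF b, rotated])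
  then have "in_ideal b ((1 - monom 1 c) ^ e) p ((1 - monom 1 (c * p ^ i)) ^ (p - 1))"
    using p2 by (intro in_ideal_power[OF b]) auto
  then show ?thesis using in_ideal_cong[OF b _ u(1) u(2)] by blast
qed

text \<open>Hence W p c (e + t), a product containing t factors with index \<ge> e, lies in
  ((1 - q^c)^e, p^t).\<close>

lemma W_in_ideal:
  assumes b: "b > 0" and p: "prime p" "odd p" and c: "c > 0"
  shows "in_ideal b ((1 - monom 1 c) ^ e) (p ^ t) (W p c (e + t))"
proof (induction t)
  case 0
  show ?case unfolding in_ideal_def using W_Zinv[OF b] by (intro exI[of _ 0] exI[of _ "W p c e"]) auto
next
  case (Suc t)
  have "W p c (e + Suc t) = W p c (e + t) * geom p (monom 1 (c * p ^ (e + t)))"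
    by (simp add: W_def)
  moreover have "in_ideal b ((1 - monom 1 c) ^ e) (p ^ t * p) (W p c (e + t) * geom p (monom 1 (c * p ^ (e + t))))"
    using Suc.IH geom_in_ideal[OF b p c, of e "e + t"] b by (intro in_ideal_times) (auto simp: Zinv_poly_power)
  ultimately show ?case by (simp add: mult.commute)
qed

lemma W_roots:
  assumes c: "c > 0" and p: "p > 0" and r: "poly (Cpoly (W p c j)) \<zeta> = 0"
  shows "\<zeta> ^ (c * p ^ j) = 1" "\<zeta> ^ c \<noteq> 1"
proof -
  have "poly (Cpoly ((1 - monom 1 c) * W p c j)) \<zeta> = poly (Cpoly (1 - monom 1 (c * p ^ j))) \<zeta>"
    by (simp only: W_mult)
  then show "\<zeta> ^ (c * p ^ j) = 1" using r by (simp add: poly_monom)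
  show "\<zeta> ^ c \<noteq> 1"
  proof
    assume z: "\<zeta> ^ c = 1"
    have "poly (Cpoly (W p c j)) \<zeta> = (\<Prod>i<j. \<Sum>k<p. ((\<zeta> ^ c) ^ (p ^ i)) ^ k)"
      unfolding W_def geom_def by (simp add: poly_prod poly_sum poly_monom power_mult)
    also have "\<dots> = of_nat p ^ j" using z by simp
    finally show False using r p by simp
  qed
qed

lemma W_rsquarefree:
  assumes c: "c > 0" and p: "p > 0" shows "rsquarefree (Cpoly (W p c j))"
proof (rule rsquarefree_dvd_rsquarefree[OF rsquarefree_one_minus_monom])
  show "0 < c * p ^ j" using c p by simp
  have "Cpoly (1 - monom 1 (c * p ^ j)) = Cpoly (1 - monom 1 c) * Cpoly (W p c j)"
    by (simp only: W_mult Cpoly_mult[symmetric])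
  then show "Cpoly (W p c j) dvd 1 - monom 1 (c * p ^ j)" by simp
qed

text \<open>A root of W has order m = p^k b' with k \<ge> 1 and b' dividing c, so m \<in> T.\<close>

lemma root_order_in_Tset:
  fixes \<zeta> :: complex
  assumes p: "prime p" and c: "c > 0" "odd c" "c dvd b ^ K" "\<not> p dvd c"
    and z1: "\<zeta> ^ (c * p ^ j) = 1" and z2: "\<zeta> ^ c \<noteq> 1"
  shows "\<exists>m. root_of_unity_order \<zeta> m \<and> m \<in> Tset b p \<and> m \<le> c * p ^ j"
proof -
  define M where "M = c * p ^ j"
  have M0: "M > 0" unfolding M_def using c p by (simp add: prime_gt_0_nat)
  define m where "m = (LEAST m. 0 < m \<and> \<zeta> ^ m = 1)"
  have m: "0 < m \<and> \<zeta> ^ m = 1"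
    unfolding m_def by (rule LeastI[of "\<lambda>m. 0 < m \<and> \<zeta> ^ m = 1" M]) (use M0 z1 M_def in simp)
  have mmin: "\<not> (0 < k \<and> \<zeta> ^ k = 1)" if "k < m" for k
    using not_less_Least[OF that[unfolded m_def]] m_def by simp
  have ord: "root_of_unity_order \<zeta> m" unfolding root_of_unity_order_def using m mmin by blast
  have dvd_of: "m dvd n" if "\<zeta> ^ n = 1" for n
  proof -
    have "\<zeta> ^ n = \<zeta> ^ (m * (n div m) + n mod m)" by simp
    also have "\<dots> = (\<zeta> ^ m) ^ (n div m) * \<zeta> ^ (n mod m)" by (simp only: power_add power_mult)
    finally have "\<zeta> ^ n = (\<zeta> ^ m) ^ (n div m) * \<zeta> ^ (n mod m)" .
    then have "\<zeta> ^ (n mod m) = 1" using m that by simp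
    then have "n mod m = 0" using mmin[of "n mod m"] m by auto
    then show ?thesis by (simp add: mod_eq_0_iff_dvd)
  qed
  have mM: "m dvd M" unfolding M_def by (rule dvd_of[OF z1])
  have mc: "\<not> m dvd c"
  proof
    assume "m dvd c"
    then obtain r where "c = m * r" by (rule dvdE)
    then have "\<zeta> ^ c = 1" using m by (simp add: power_mult)
    then show False using z2 by simp
  qed
  define k where "k = multiplicity p m"
  define b' where "b' = m div p ^ k"
  have mdec: "m = p ^ k * b'" unfolding b'_def k_def by (simp add: multiplicity_dvd)
  have npb: "\<not> p dvd b'" unfolding b'_def k_def
    using m p by (intro multiplicity_decompose) (auto simp: prime_gt_1_nat)
  have "coprime b' (p ^ j)" using prime_imp_coprime_nat[OF p npb] by (simp add: coprime_commute)
  moreover have "b' dvd c * p ^ j" using mdec mM unfolding M_def by (metis dvd_mult_right)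
  ultimately have b'c: "b' dvd c" by (simp add: coprime_dvd_mult_left_iff)
  have "k \<ge> 1" using mc b'c mdec by (cases k) auto
  moreover have "b' > 0" using m mdec by (simp add: nat_0_less_mult_iff)
  moreover have "odd b'" using b'c c(2) dvd_trans by blast
  moreover have "b' dvd b ^ K" using b'c c(3) by (rule dvd_trans)
  ultimately have "m \<in> Tset b p" unfolding Tset_def using mdec by blast
  moreover have "m \<le> c * p ^ j" using mM M0 unfolding M_def by (simp add: dvd_imp_le)
  ultimately show ?thesis using ord by blast
qed

definition vanishes_on_Tset :: "nat \<Rightarrow> nat \<Rightarrow> (nat \<Rightarrow> rat poly) \<Rightarrow> bool" where
  "vanishes_on_Tset b p h \<longleftrightarrow>
     (\<forall>\<xi> m. root_of_unity_order \<xi> m \<and> m \<in> Tset b p \<longrightarrow> poly (Cpoly (h m)) \<xi> = 0)"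

lemma W_dvd:
  assumes b: "b > 0" and p: "prime p" "odd p" "\<not> p dvd b" and h: "in_Rb b h"
    and van: "vanishes_on_Tset b p h" and c: "c > 0" "odd c" "c dvd b ^ K" and N: "c * p ^ j < 2 * N"
  shows "Zinv_dvd b (W p c j) (h N)"
proof -
  have p0: "p > 0" using p(1) prime_gt_0_nat by blast
  have pc: "\<not> p dvd c" using c(3) p prime_dvd_power dvd_trans by metis
  have "poly (Cpoly (h N)) \<zeta> = 0" if z: "poly (Cpoly (W p c j)) \<zeta> = 0" for \<zeta>
  proof -
    obtain m where m: "root_of_unity_order \<zeta> m" "m \<in> Tset b p" "m \<le> c * p ^ j"
      using root_order_in_Tset[OF p(1) c pc W_roots[OF c(1) p0 z]] by blast
    have "odd m" using m(2) p(2) unfolding Tset_def by auto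
    then show ?thesis using in_Rb_vanish[OF b h m(1)] van m N unfolding vanishes_on_Tset_def by auto
  qed
  then have "Cpoly (W p c j) dvd Cpoly (h N)" by (intro rsquarefree_dvd[OF W_rsquarefree[OF c(1) p0]]) blast
  then have "W p c j dvd h N" by (rule Cpoly_dvd_imp_dvd)
  moreover have "Zinv_poly b (h N)" using h unfolding in_Rb_def by blast
  ultimately show ?thesis by (rule Zinv_dvd_if_dvd[OF b W_Zinv[OF b] W_coeff_0[OF c(1) p0], rotated])
qed

definition tail_divisible :: "nat \<Rightarrow> (nat \<Rightarrow> rat poly) \<Rightarrow> nat \<Rightarrow> bool" where
  "tail_divisible b h n \<longleftrightarrow> (\<forall>e. \<exists>N0. \<forall>N\<ge>N0. Zinv_dvd b ((1 - monom 1 n) ^ e) (h N))"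

text \<open>The common pattern of the base case and the induction step.  Let D = (1 - q^n)^e
  with n odd and N \<ge> n e, so that D divides (q;q^2)_N.  If for every t some later
  representative h N' is a multiple of an element of (D, l^t), then so is h N, since
  h N' - h N is a multiple of (q;q^2)_N; by separation D divides h N.\<close>

lemma Zinv_dvd_from_ideals:
  assumes b: "b > 0" and l: "prime l" "\<not> l dvd b" and h: "in_Rb b h"
    and n: "odd n" and N: "N \<ge> n * e"
    and ideals: "\<And>t. \<exists>N'\<ge>N. \<exists>A. in_ideal b ((1 - monom 1 n) ^ e) (l ^ t) A \<and> Zinv_dvd b A (h N')"
  shows "Zinv_dvd b ((1 - monom 1 n) ^ e) (h N)"
proof -
  define D where "D = (1 - monom (1::rat) n) ^ e"
  have n0: "n > 0" using n by (cases n) auto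
  have hZ: "Zinv_poly b (h N)" using h unfolding in_Rb_def by blast
  have "in_ideal b D (l ^ t) (h N)" for t
  proof -
    obtain N' A where N': "N' \<ge> N" and A: "in_ideal b D (l ^ t) A" "Zinv_dvd b A (h N')"
      using ideals unfolding D_def by blast
    obtain H where H: "Zinv_poly b H" "h N' = A * H" using A(2) unfolding Zinv_dvd_def by blast
    have "in_ideal b D (l ^ t) (h N')" unfolding H(2) by (rule in_ideal_mult[OF b A(1) H(1)])
    moreover have "Zinv_dvd b D (h N' - h N)" unfolding D_def
      using Zinv_dvd_trans[OF b one_minus_monom_power_Zinv_dvd_qpoch[OF b n N] in_Rb_compat[OF b h N']] .
    ultimately have "in_ideal b D (l ^ t) (h N' - (h N' - h N))" by (rule in_ideal_diff_multiple[OF b])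
    then show ?thesis by simp
  qed
  moreover have "Zinv_poly b D" unfolding D_def using b by (simp add: Zinv_poly_power)
  ultimately show ?thesis unfolding D_def
    using separation[OF b l _ lead_coeff_one_minus_monom_power[OF n0] hZ] by blast
qed

text \<open>Base case: an odd c dividing a power of b is tail divisible, taking for A the
  polynomial W p c (e + t), which divides h N' by W_dvd.\<close>

lemma tail_divisible_base:
  assumes b: "b > 0" and p: "prime p" "odd p" "\<not> p dvd b" and h: "in_Rb b h"
    and van: "vanishes_on_Tset b p h" and c: "c > 0" "odd c" "c dvd b ^ K"
  shows "tail_divisible b h c"
  unfolding tail_divisible_def
proof (intro allI exI impI allI)
  fix e N assume N: "N \<ge> c * e"
  show "Zinv_dvd b ((1 - monom 1 c) ^ e) (h N)"
  proof (rule Zinv_dvd_from_ideals[OF b p(1,3) h c(2) N])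
    fix t
    define N' where "N' = max N (c * p ^ (e + t))"
    have "c * p ^ (e + t) > 0" using c(1) p(1) by (simp add: prime_gt_0_nat)
    then have "c * p ^ (e + t) < 2 * N'" unfolding N'_def by linarith
    then have "Zinv_dvd b (W p c (e + t)) (h N')" by (rule W_dvd[OF b p h van c])
    moreover have "in_ideal b ((1 - monom 1 c) ^ e) (p ^ t) (W p c (e + t))"
      by (rule W_in_ideal[OF b p(1,2) c(1)])
    moreover have "N \<le> N'" unfolding N'_def by simp
    ultimately show "\<exists>N'\<ge>N. \<exists>A. in_ideal b ((1 - monom 1 c) ^ e) (p ^ t) A \<and> Zinv_dvd b A (h N')"
      by blast
  qed
qed

text \<open>Induction step: from (1 - q^n)^l = 1 - q^(n l) (mod l) we get
  (1 - q^n)^(l (e+t)) \<in> ((1 - q^(n l))^e, l^t), and (1 - q^n)^(l (e+t)) divides h N'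
  for large N'.\<close>

lemma tail_divisible_step:
  assumes b: "b > 0" and l: "prime l" "odd l" "\<not> l dvd b" and h: "in_Rb b h"
    and n: "odd n" and tail: "tail_divisible b h n"
  shows "tail_divisible b h (n * l)"
  unfolding tail_divisible_def
proof (intro allI exI impI allI)
  fix e N assume N: "N \<ge> n * l * e"
  have nl: "odd (n * l)" using n l(2) by simp
  obtain w where w: "Zinv_poly b w" "(1 - monom 1 n) ^ l = 1 - monom 1 n ^ l + smult (of_nat l) w"
    using frobenius_cong[OF b l(1,2) Zinv_poly_monom_1] by blast
  have "in_ideal b (1 - monom 1 (n * l)) l ((1 - monom 1 n) ^ l)"
    unfolding in_ideal_def using w by (intro exI[of _ 1] exI[of _ w]) (simp add: monom_power)
  then have ideal: "in_ideal b ((1 - monom 1 (n * l)) ^ e) (l ^ t) ((1 - monom 1 n) ^ (l * (e + t)))" for t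
    using in_ideal_power_split[OF b Zinv_poly_one_minus_monom] by (simp add: power_mult)
  show "Zinv_dvd b ((1 - monom 1 (n * l)) ^ e) (h N)"
  proof (rule Zinv_dvd_from_ideals[OF b l(1,3) h nl N])
    fix t
    obtain N1 where "\<forall>N\<ge>N1. Zinv_dvd b ((1 - monom 1 n) ^ (l * (e + t))) (h N)"
      using tail unfolding tail_divisible_def by blast
    then have "Zinv_dvd b ((1 - monom 1 n) ^ (l * (e + t))) (h (max N N1))" by simp
    moreover have "N \<le> max N N1" by simp
    ultimately show "\<exists>N'\<ge>N. \<exists>A. in_ideal b ((1 - monom 1 (n * l)) ^ e) (l ^ t) A \<and> Zinv_dvd b A (h N')"
      using ideal[of t] by blast
  qed
qed

lemma dvd_power_if_prime_factors_dvd: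
  assumes "\<forall>q. prime q \<longrightarrow> q dvd n \<longrightarrow> q dvd b" "n > 0"
  shows "n dvd b ^ n"
  using assms
proof (induction n rule: less_induct)
  case (less n)
  show ?case
  proof (cases "n = 1")
    case False
    then obtain q where q: "prime q" "q dvd n" using prime_factor_nat[of n] by blast
    then obtain n' where n': "n = q * n'" by blast
    have n'0: "n' > 0" using less.prems n' by (cases n') auto
    have lt: "n' < n" using n' prime_gt_1_nat[OF q(1)] n'0 by simp
    have "\<forall>r. prime r \<longrightarrow> r dvd n' \<longrightarrow> r dvd b" using less.prems(1) unfolding n' by simp
    then have "n' dvd b ^ n'" using less.IH[OF lt] n'0 by blast
    moreover have "q dvd b" using less.prems q by blast
    ultimately have "q * n' dvd b * b ^ n'" by (rule mult_dvd_mono[rotated])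
    also have "b * b ^ n' dvd b ^ n" using lt by (metis Suc_leI le_imp_power_dvd power_Suc)
    finally show ?thesis unfolding n' .
  qed simp
qed

text \<open>Every odd n is tail divisible: split off the prime factors of n not dividing b
  one at a time; what remains divides a power of b.\<close>

lemma tail_divisible_odd:
  assumes b: "b > 0" and p: "prime p" "odd p" "\<not> p dvd b" and h: "in_Rb b h"
    and van: "vanishes_on_Tset b p h"
  shows "odd n \<Longrightarrow> tail_divisible b h n"
proof (induction n rule: less_induct)
  case (less n)
  have n0: "n > 0" using less.prems by (cases n) auto
  show ?case
  proof (cases "\<exists>l. prime l \<and> l dvd n \<and> \<not> l dvd b")
    case True
    then obtain l where l: "prime l" "l dvd n" "\<not> l dvd b" by blast
    define n' where "n' = n div l"
    have n': "n = n' * l" unfolding n'_def using l(2) by simp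
    have odd: "odd l" "odd n'" using less.prems n' by auto
    have "n' < n" using n' n0 prime_gt_1_nat[OF l(1)] by simp
    then have "tail_divisible b h n'" using less.IH odd(2) by blast
    then show ?thesis unfolding n' by (rule tail_divisible_step[OF b l(1) odd(1) l(3) h odd(2)])
  next
    case False
    then have "n dvd b ^ n" using n0 by (intro dvd_power_if_prime_factors_dvd) auto
    then show ?thesis by (rule tail_divisible_base[OF b p h van n0 less.prems])
  qed
qed

text \<open>Conclusion: with L = 1 * 3 * ... * (2k-1), (q;q^2)_k divides (1 - q^L)^k, which divides
  h N for large N; since h N = h k modulo (q;q^2)_k, it divides h k.\<close>

lemma qpoch_dvd_if_tail_divisible:
  assumes b: "b > 0" and h: "in_Rb b h" and tail: "tail_divisible b h (\<Prod>i<k. 2 * i + 1)"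
  shows "Zinv_dvd b (qpoch k) (h k)"
proof -
  define L where "L = (\<Prod>i<k. 2 * i + 1 :: nat)"
  obtain N0 where N0: "\<forall>N\<ge>N0. Zinv_dvd b ((1 - monom 1 L) ^ k) (h N)"
    using tail unfolding tail_divisible_def L_def by blast
  define N where "N = max N0 k"
  have "qpoch k dvd (\<Prod>i<k. 1 - monom (1::rat) L)" unfolding qpoch_def
  proof (rule prod_dvd_prod)
    fix i assume "i \<in> {..<k}"
    then have "2 * i + 1 dvd L" unfolding L_def by (intro dvd_prodI) auto
    then show "1 - monom (1::rat) (2 * i + 1) dvd 1 - monom 1 L" by (metis dvdE one_minus_monom_dvd)
  qed
  also have "\<dots> dvd h N" using N0 Zinv_dvd_imp_dvd[of b] unfolding N_def by simp
  finally have "qpoch k dvd h N" .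
  moreover have "qpoch k dvd h N - h k" using in_Rb_compat[OF b h, of k N] Zinv_dvd_imp_dvd N_def by simp
  ultimately have "qpoch k dvd h N - (h N - h k)" by (rule dvd_diff)
  then have "qpoch k dvd h k" by simp
  moreover have "Zinv_poly b (h k)" using h unfolding in_Rb_def by blast
  ultimately show ?thesis by (rule Zinv_dvd_if_dvd[OF b qpoch_Zinv[OF b] qpoch_coeff_0, rotated])
qed

theorem proposition2:
  fixes b p :: nat and f g :: "nat \<Rightarrow> rat poly"
  assumes "b > 0" and "prime p" and "odd p" and "\<not> p dvd b"
    and "in_Rb b f" and "in_Rb b g"
    and "\<forall>\<xi> m. root_of_unity_order \<xi> m \<and> m \<in> Tset b p \<longrightarrow> ev \<xi> m f = ev \<xi> m g"
  shows "Rb_eq b f g"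
  unfolding Rb_eq_def
proof
  fix k
  define h where "h = (\<lambda>N. f N - g N)"
  have h: "in_Rb b h" unfolding h_def by (rule in_Rb_diff[OF assms(1,5,6)])
  have "vanishes_on_Tset b p h" using assms(7) unfolding vanishes_on_Tset_def ev_def h_def by simp
  moreover have "odd (\<Prod>i<k. 2 * i + 1 :: nat)" by (induction k) auto
  ultimately have "tail_divisible b h (\<Prod>i<k. 2 * i + 1)"
    by (rule tail_divisible_odd[OF assms(1-4) h])
  then have "Zinv_dvd b (qpoch k) (h k)" by (rule qpoch_dvd_if_tail_divisible[OF assms(1) h])
  then show "Zinv_dvd b (qpoch k) (f k - g k)" unfolding h_def .
qed

end
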